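(* Let $a=\{a_1,\dots,a_m\}$ be a set of positive rational numbers different from $1$, and for $n\ge 0$ let $\mathcal{A}'_n(a)$ be the arrangement obtained from $\mathcal{A}_n(a)$ by removing the $n$ coordinate hyperplanes $x_i=0$. Then for every $n\ge 1$, $$\chi_{\mathcal{A}'_n(a)}(t)=\chi_{\mathcal{A}_n(a)}(t)+n\,\chi_{\mathcal{A}_{n-1}(a)}(t).$$
   Context: For a set $a=\{a_1,\dots,a_m\}$ of positive rational numbers different from $1$ and $n\ge 1$, $\mathcal{A}_n(a)$ denotes the hyperplane arrangement in $\mathbb{R}^n$ consisting of the hyperplanes $x_i=0$ ($1\le i\le n$), $x_i=x_j$ ($1\le i<j\le n$), and $x_i=a_rx_j$ ($1\le i\neq j\le n$, $1\le r\le m$); $\mathcal{A}_0(a)$ is the empty arrangement in $\mathbb{R}^0$, with characteristic polynomial $1$. For a finite arrangement $\mathcal{A}$ of affine hyperplanes in $\mathbb{R}^n$, the characteristic polynomial is $\chi_{\mathcal{A}}(t)=\sum_{\mathcal{B}}(-1)^{\#\mathcal{B}}t^{n-\operatorname{rank}(\mathcal{B})}$, the sum over subsets $\mathcal{B}\subseteq\mathcal{A}$ whose hyperplanes have nonempty common intersection, where $\operatorname{rank}(\mathcal{B})$ is the dimension of the span of the normal vectors of the hyperplanes in $\mathcal{B}$. *)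

theory Defs
  imports "HOL-Analysis.Analysis" "HOL-Library.Function_Algebras"
begin

text \<open>Points and vectors of R^n are modelled as functions nat => real vanishing
  at every index i >= n (coordinates are indexed 0..n-1).\<close>

definition Rn :: "nat \<Rightarrow> (nat \<Rightarrow> real) set" where
  "Rn n = {x. \<forall>i\<ge>n. x i = 0}"

definition fscale :: "real \<Rightarrow> (nat \<Rightarrow> real) \<Rightarrow> (nat \<Rightarrow> real)" where
  "fscale r w = (\<lambda>i. r * w i)"

definition dotn :: "nat \<Rightarrow> (nat \<Rightarrow> real) \<Rightarrow> (nat \<Rightarrow> real) \<Rightarrow> real" where
  "dotn n w x = (\<Sum>i<n. w i * x i)"

definition hyperplane :: "nat \<Rightarrow> (nat \<Rightarrow> real) \<Rightarrow> real \<Rightarrow> (nat \<Rightarrow> real) set" where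
  "hyperplane n w c = {x \<in> Rn n. dotn n w x = c}"

definition is_hyperplane :: "nat \<Rightarrow> (nat \<Rightarrow> real) set \<Rightarrow> bool" where
  "is_hyperplane n H \<longleftrightarrow> (\<exists>w c. w \<in> Rn n \<and> w \<noteq> 0 \<and> H = hyperplane n w c)"

definition normals :: "nat \<Rightarrow> (nat \<Rightarrow> real) set set \<Rightarrow> (nat \<Rightarrow> real) set" where
  "normals n B = {w. w \<in> Rn n \<and> w \<noteq> 0 \<and> (\<exists>H\<in>B. \<exists>c. H = hyperplane n w c)}"

definition arr_rank :: "nat \<Rightarrow> (nat \<Rightarrow> real) set set \<Rightarrow> nat" where
  "arr_rank n B = vector_space.dim fscale (normals n B)"

definition char_poly :: "nat \<Rightarrow> (nat \<Rightarrow> real) set set \<Rightarrow> real poly" where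
  "char_poly n A = (\<Sum>B \<in> {B. B \<subseteq> A \<and> Rn n \<inter> \<Inter>B \<noteq> {}}.
      (-1) ^ card B * monom 1 (n - arr_rank n B))"

definition unitv :: "nat \<Rightarrow> nat \<Rightarrow> real" where
  "unitv i = (\<lambda>j. if j = i then 1 else 0)"

definition coord_hyps :: "nat \<Rightarrow> (nat \<Rightarrow> real) set set" where
  "coord_hyps n = {hyperplane n (unitv i) 0 | i. i < n}"

definition arrA :: "rat set \<Rightarrow> nat \<Rightarrow> (nat \<Rightarrow> real) set set" where
  "arrA a n = coord_hyps n
     \<union> {hyperplane n (unitv i - unitv j) 0 | i j. i < j \<and> j < n}
     \<union> {hyperplane n (unitv i - fscale (of_rat r) (unitv j)) 0 | i j r.
          i < n \<and> j < n \<and> i \<noteq> j \<and> r \<in> a}"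

definition arrA' :: "rat set \<Rightarrow> nat \<Rightarrow> (nat \<Rightarrow> real) set set" where
  "arrA' a n = arrA a n - coord_hyps n"

end

theory Submission
  imports Defs
begin

text \<open>All hyperplanes of A_n(a) pass through the origin, so every characteristic polynomial
  involved is Whitney's sum over all subsets of hyperplanes. Remove the coordinate hyperplanes
  x_0 = 0, ..., x_(n-1) = 0 one at a time. Each step is an instance of deletion-restriction,
  chi(A) = chi(A - {H}) - chi(A restricted to H), and the restriction to x_k = 0 of what is
  left is always exactly A_(n-1)(a): x_i = x_k and x_i = a_r x_k restrict to coordinate
  hyperplanes (this needs a_r \<noteq> 0), every other hyperplane to its counterpart in one
  dimension less, and each hyperplane of A_(n-1)(a) arises. Deletion-restriction itself comes
  from Whitney's formula: the rank of insert H B exceeds that of the restriction of B by one,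
  and grouping the subsets B by their restriction R leaves, per fibre, an alternating sum
  equal to (-1)^|R|.\<close>

interpretation V: vector_space fscale
  by unfold_locales (auto simp: fscale_def fun_eq_iff algebra_simps)

interpretation VP: vector_space_pair fscale fscale ..

lemma fscale_apply [simp]: "fscale c w j = c * w j"
  by (simp add: fscale_def)

lemma fscale_zero [simp]: "fscale c 0 = 0"
  by (simp add: fun_eq_iff)

lemma fscale_zero_left [simp]: "fscale 0 w = 0"
  by (simp add: fun_eq_iff)

lemma fscale_one [simp]: "fscale 1 w = w"
  by (simp add: fun_eq_iff)

lemma (in vector_space) dim_insert_not_in_span:
  assumes "finite S" "x \<notin> span S"
  shows "dim (insert x S) = Suc (dim S)"
proof -
  obtain B where B: "B \<subseteq> S" "independent B" "S \<subseteq> span B" "card B = dim S"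
    using basis_exists by blast
  have "x \<notin> span B"
    using assms(2) B(1) span_mono by blast
  then have "x \<notin> B" "independent (insert x B)"
    using B(2) span_base independent_insertI by auto
  moreover have "card (insert x B) = dim (insert x S)"
    using B(1,3) \<open>independent (insert x B)\<close> span_mono[of B "insert x B"]
    by (intro basis_card_eq_dim) (auto intro: span_base)
  ultimately show ?thesis
    using B(1,4) assms(1) finite_subset by fastforce
qed

lemma (in vector_space_pair) dim_image_inj:
  assumes "Vector_Spaces.linear s1 s2 f" "inj f"
  shows "vs2.dim (f ` S) = vs1.dim S"
proof -
  obtain B where B: "B \<subseteq> S" "vs1.independent B" "S \<subseteq> vs1.span B" "card B = vs1.dim S"
    using vs1.basis_exists by blast
  have "vs2.independent (f ` B)"
    using linear_independent_injective_image[OF assms(1) B(2)] assms(2) inj_on_subset by blast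
  moreover have "vs2.span (f ` B) = f ` vs1.span B"
    using linear_span_image[OF assms(1)] by blast
  ultimately have "card (f ` B) = vs2.dim (f ` S)"
    using B by (intro vs2.basis_card_eq_dim) auto
  then show ?thesis
    using B(4) assms(2) card_image inj_on_subset by (metis subset_UNIV)
qed

section \<open>Deleting a coordinate\<close>

definition skip :: "nat \<Rightarrow> nat \<Rightarrow> nat" where
  "skip k j = (if j < k then j else Suc j)"

definition del :: "nat \<Rightarrow> (nat \<Rightarrow> real) \<Rightarrow> (nat \<Rightarrow> real)" where
  "del k w = (\<lambda>j. w (skip k j))"

definition ins :: "nat \<Rightarrow> (nat \<Rightarrow> real) \<Rightarrow> (nat \<Rightarrow> real)" where
  "ins k y = (\<lambda>j. if j = k then 0 else if j < k then y j else y (j - 1))"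

lemma skip_inject [simp]: "skip k i = skip k j \<longleftrightarrow> i = j"
  by (auto simp: skip_def)

lemma skip_less: "k < n \<Longrightarrow> j < n - 1 \<Longrightarrow> skip k j < n"
  by (auto simp: skip_def)

lemma skip_neq [simp]: "skip k j \<noteq> k" "k \<noteq> skip k j"
  by (simp_all add: skip_def)

lemma inj_skip: "inj (skip k)"
  by (simp add: inj_def)

lemma skip_lessThan:
  assumes "k < n"
  shows "skip k ` {..<n - 1} = {..<n} - {k}"
proof
  show "skip k ` {..<n - 1} \<subseteq> {..<n} - {k}"
    using assms by (auto simp: skip_def)
  show "{..<n} - {k} \<subseteq> skip k ` {..<n - 1}"
  proof
    fix i assume "i \<in> {..<n} - {k}"
    then have "i = skip k (if i < k then i else i - 1)" "(if i < k then i else i - 1) < n - 1"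
      using assms by (auto simp: skip_def)
    then show "i \<in> skip k ` {..<n - 1}"
      by blast
  qed
qed

lemma skip_preimageE:
  assumes "i < n" "i \<noteq> k" "k < n"
  obtains i' where "i' < n - 1" "i = skip k i'"
  using assms skip_lessThan[of k n] by blast

lemma ins_skip [simp]: "ins k y (skip k j) = y j"
  by (auto simp: ins_def skip_def)

lemma del_unitv_self [simp]: "del k (unitv k) = 0"
  by (simp add: del_def unitv_def fun_eq_iff)

lemma del_unitv_skip [simp]: "del k (unitv (skip k i)) = unitv i"
  by (simp add: del_def unitv_def fun_eq_iff)

lemma del_diff [simp]: "del k (v - w) = del k v - del k w"
  by (simp add: del_def fun_eq_iff)

lemma del_fscale [simp]: "del k (fscale c w) = fscale c (del k w)"
  by (simp add: del_def fun_eq_iff)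

lemma del_eq_0_imp:
  assumes "del k w = 0"
  shows "w = fscale (w k) (unitv k)"
proof
  fix j
  show "w j = fscale (w k) (unitv k) j"
  proof (cases "j = k")
    case False
    then have "j = skip k (if j < k then j else j - 1)"
      by (auto simp: skip_def)
    then have "w j = del k w (if j < k then j else j - 1)"
      by (simp add: del_def)
    then show ?thesis
      using assms False by (simp add: unitv_def)
  qed (simp add: unitv_def)
qed

lemma ins_del: "ins k (del k w) = w - fscale (w k) (unitv k)"
  by (auto simp: fun_eq_iff ins_def del_def skip_def unitv_def)

lemma linear_ins: "Vector_Spaces.linear fscale fscale (ins k)"
  by (auto simp: Vector_Spaces.linear_iff V.vector_space_axioms ins_def fun_eq_iff)

lemma inj_ins: "inj (ins k)"
proof (rule injI)
  fix x y assume "ins k x = ins k y"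
  then have "ins k x (skip k j) = ins k y (skip k j)" for j
    by simp
  then show "x = y"
    by (simp add: fun_eq_iff)
qed

lemma span_insert_unitv:
  "V.span (insert (unitv k) W) = V.span (insert (unitv k) (ins k ` del k ` W))"
  (is "V.span ?W = V.span ?U")
proof (rule V.span_eq[THEN iffD2], intro conjI subsetI)
  \<comment> \<open>\<open>w\<close> and \<open>ins k (del k w)\<close> differ by a multiple of \<open>unitv k\<close>\<close>
  have e: "fscale c (unitv k) \<in> V.span ?U" for c
    by (simp add: V.span_base V.span_scale)
  fix v assume "v \<in> ?W"
  then show "v \<in> V.span ?U"
  proof
    assume "v \<in> W"
    then have "ins k (del k v) \<in> V.span ?U"
      by (simp add: V.span_base)
    moreover have "v = ins k (del k v) + fscale (v k) (unitv k)"
      by (simp add: ins_del)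
    ultimately show ?thesis
      using V.span_add[OF _ e] by metis
  qed (simp add: V.span_base)
next
  have e: "fscale c (unitv k) \<in> V.span ?W" for c
    by (simp add: V.span_base V.span_scale)
  fix v assume "v \<in> ?U"
  then show "v \<in> V.span ?W"
  proof
    assume "v \<in> ins k ` del k ` W"
    then obtain w where "w \<in> W" "v = w - fscale (w k) (unitv k)"
      by (auto simp: ins_del)
    then show ?thesis
      using V.span_diff[OF _ e] by (simp add: V.span_base)
  qed (simp add: V.span_base)
qed

lemma dim_insert_unitv:
  assumes "finite W"
  shows "V.dim (insert (unitv k) W) = Suc (V.dim (del k ` W))"
proof -
  have "V.dim (insert (unitv k) W) = V.dim (insert (unitv k) (ins k ` del k ` W))"
    using span_insert_unitv by (rule V.span_eq_dim)
  also have "\<dots> = Suc (V.dim (ins k ` del k ` W))"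
  proof (rule V.dim_insert_not_in_span)
    have "V.span (ins k ` del k ` W) \<subseteq> {x. x k = 0}"
      by (rule V.span_minimal) (auto simp: ins_def V.subspace_def)
    then show "unitv k \<notin> V.span (ins k ` del k ` W)"
      by (auto simp: unitv_def)
  qed (use assms in simp)
  also have "V.dim (ins k ` del k ` W) = V.dim (del k ` W)"
    by (rule VP.dim_image_inj[OF linear_ins inj_ins])
  finally show ?thesis .
qed

section \<open>Central hyperplanes and their rank\<close>

definition central_hyperplane :: "nat \<Rightarrow> (nat \<Rightarrow> real) set \<Rightarrow> bool" where
  "central_hyperplane n H \<longleftrightarrow> (\<exists>w \<in> Rn n - {0}. H = hyperplane n w 0)"

lemma unitv_in_Rn: "i < n \<Longrightarrow> unitv i \<in> Rn n"
  by (simp add: Rn_def unitv_def)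

lemma unitv_neq_0 [simp]: "unitv i \<noteq> 0"
  by (auto simp: unitv_def fun_eq_iff)

lemma zero_in_Rn: "0 \<in> Rn n"
  by (simp add: Rn_def)

lemma dotn_unitv: "j < n \<Longrightarrow> dotn n w (unitv j) = w j"
  by (simp add: dotn_def unitv_def if_distrib cong: if_cong)

lemma dotn_diff: "dotn n w (x - y) = dotn n w x - dotn n w y"
  by (simp add: dotn_def algebra_simps sum_subtractf)

lemma dotn_fscale_right: "dotn n w (fscale c x) = c * dotn n w x"
  by (simp add: dotn_def algebra_simps sum_distrib_left)

lemma dotn_fscale_left: "dotn n (fscale c w) x = c * dotn n w x"
  by (simp add: dotn_def algebra_simps sum_distrib_left)

lemma dotn_zero: "dotn n w 0 = 0"
  by (simp add: dotn_def)

lemma hyperplane_fscale: "c \<noteq> 0 \<Longrightarrow> hyperplane n (fscale c w) 0 = hyperplane n w 0"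
  by (simp add: hyperplane_def dotn_fscale_left)

lemma hyperplane_uminus: "hyperplane n (- w) 0 = hyperplane n w 0"
  using hyperplane_fscale[of "-1" n w] by (simp add: fun_eq_iff)

lemma hyperplane_eq_imp_proportional:
  assumes w: "w \<in> Rn n" and v: "v \<in> Rn n" "v \<noteq> 0"
    and eq: "hyperplane n w c = hyperplane n v 0"
  shows "\<exists>s. w = fscale s v"
proof -
  obtain p where p: "v p \<noteq> 0"
    using v(2) by (auto simp: fun_eq_iff)
  have "p < n"
  proof (rule ccontr)
    assume "\<not> p < n"
    then have "v p = 0"
      using v(1) by (simp add: Rn_def)
    with p show False
      by simp
  qed
  have "0 \<in> hyperplane n w c"
    using eq by (simp add: hyperplane_def zero_in_Rn dotn_zero)
  then have "c = 0"
    by (simp add: hyperplane_def dotn_zero)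
  have "w j = (w p / v p) * v j" for j
  proof (cases "j < n")
    case False
    then show ?thesis
      using w v by (simp add: Rn_def)
  next
    case True
    define x where "x = unitv j - fscale (v j / v p) (unitv p)"
    have "x \<in> Rn n"
      using True \<open>p < n\<close> by (auto simp: x_def Rn_def unitv_def)
    moreover have "dotn n v x = 0"
      using True \<open>p < n\<close> p by (simp add: x_def dotn_diff dotn_fscale_right dotn_unitv)
    ultimately have "x \<in> hyperplane n w c"
      using eq by (simp add: hyperplane_def)
    then have "dotn n w x = 0"
      using \<open>c = 0\<close> by (simp add: hyperplane_def)
    then have "w j - v j / v p * w p = 0"
      using True \<open>p < n\<close> by (simp only: x_def dotn_diff dotn_fscale_right dotn_unitv)
    then show ?thesis
      using p by (simp add: field_simps)
  qed
  then have "w = fscale (w p / v p) v"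
    unfolding fun_eq_iff fscale_apply by blast
  then show ?thesis
    by blast
qed

lemma hyperplane_neq_coord:
  assumes "w p \<noteq> 0" "p < n" "p \<noteq> j"
  shows "hyperplane n w 0 \<noteq> hyperplane n (unitv j) 0"
proof
  assume eq: "hyperplane n w 0 = hyperplane n (unitv j) 0"
  have "dotn n (unitv j) (unitv p) = 0"
    using assms(2,3) by (simp add: dotn_unitv) (simp add: unitv_def)
  then have "unitv p \<in> hyperplane n (unitv j) 0"
    using assms(2) by (simp add: hyperplane_def unitv_in_Rn)
  moreover have "unitv p \<notin> hyperplane n w 0"
    using assms(1,2) by (simp add: hyperplane_def dotn_unitv)
  ultimately show False
    using eq by simp
qed

lemma arr_rank_image:
  assumes "W \<subseteq> Rn n - {0}"
  shows "arr_rank n ((\<lambda>w. hyperplane n w 0) ` W) = V.dim W"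
proof -
  have "V.span (normals n ((\<lambda>w. hyperplane n w 0) ` W)) = V.span W"
  proof (rule V.span_eq[THEN iffD2], intro conjI subsetI)
    fix u assume "u \<in> normals n ((\<lambda>w. hyperplane n w 0) ` W)"
    then obtain w c where "u \<in> Rn n" "w \<in> W" "hyperplane n w 0 = hyperplane n u c"
      by (auto simp: normals_def)
    moreover from this obtain s where "u = fscale s w"
      using hyperplane_eq_imp_proportional[of u n w c] assms by auto
    ultimately show "u \<in> V.span W"
      by (simp add: V.span_base V.span_scale)
  next
    fix w assume "w \<in> W"
    then show "w \<in> V.span (normals n ((\<lambda>w. hyperplane n w 0) ` W))"
      using assms by (force simp: normals_def intro!: V.span_base)
  qed
  then show ?thesis
    unfolding arr_rank_def by (rule V.span_eq_dim)
qed

text \<open>The restriction of \<open>H\<close> to \<open>x\<^sub>k = 0\<close>, a copy of \<open>\<real>\<^sup>m\<close> via \<open>ins k\<close>.\<close>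

definition restr :: "nat \<Rightarrow> nat \<Rightarrow> (nat \<Rightarrow> real) set \<Rightarrow> (nat \<Rightarrow> real) set" where
  "restr m k H = {y \<in> Rn m. ins k y \<in> H}"

lemma dotn_ins:
  assumes "k < n"
  shows "dotn n w (ins k y) = dotn (n - 1) (del k w) y"
proof -
  have "dotn n w (ins k y) = (\<Sum>j \<in> insert k (skip k ` {..<n - 1}). w j * ins k y j)"
    using skip_lessThan[OF assms] assms by (simp add: dotn_def insert_absorb)
  also have "\<dots> = (\<Sum>j \<in> skip k ` {..<n - 1}. w j * ins k y j)"
    by (subst sum.insert) (auto simp: ins_def)
  also have "\<dots> = dotn (n - 1) (del k w) y"
    by (simp add: sum.reindex inj_on_subset[OF inj_skip] dotn_def del_def)
  finally show ?thesis .
qed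

lemma ins_in_Rn: "k < n \<Longrightarrow> y \<in> Rn (n - 1) \<Longrightarrow> ins k y \<in> Rn n"
  by (auto simp: Rn_def ins_def)

lemma restr_hyperplane:
  "k < n \<Longrightarrow> m = n - 1 \<Longrightarrow> restr m k (hyperplane n w 0) = hyperplane m (del k w) 0"
  by (auto simp: restr_def hyperplane_def dotn_ins ins_in_Rn)

lemma del_in_Rn: "k < n \<Longrightarrow> w \<in> Rn n \<Longrightarrow> del k w \<in> Rn (n - 1)"
  by (auto simp: Rn_def del_def skip_def)

lemma central_hyperplanes_normals:
  assumes "finite B" "\<forall>H \<in> B. central_hyperplane n H"
  obtains W where "finite W" "W \<subseteq> Rn n - {0}" "B = (\<lambda>w. hyperplane n w 0) ` W"
proof -
  have "\<forall>H \<in> B. \<exists>w. w \<in> Rn n - {0} \<and> hyperplane n w 0 = H"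
    using assms(2) unfolding central_hyperplane_def by fastforce
  then obtain nv where nv: "\<forall>H \<in> B. nv H \<in> Rn n - {0} \<and> hyperplane n (nv H) 0 = H"
    by (auto dest: bchoice)
  then have nv_Rn: "\<forall>H \<in> B. nv H \<in> Rn n - {0}" and nv_eq: "\<forall>H \<in> B. hyperplane n (nv H) 0 = H"
    by simp_all
  have "(\<lambda>w. hyperplane n w 0) ` nv ` B = (\<lambda>H. hyperplane n (nv H) 0) ` B"
    by (simp add: image_image)
  also have "\<dots> = (\<lambda>H. H) ` B"
    by (rule image_cong[OF refl]) (use nv_eq in blast)
  finally have "B = (\<lambda>w. hyperplane n w 0) ` nv ` B"
    by simp
  moreover have "finite (nv ` B)"
    using assms(1) by simp
  moreover have "nv ` B \<subseteq> Rn n - {0}"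
    using nv_Rn by auto
  ultimately show ?thesis
    using that by metis
qed

lemma del_normal:
  assumes "k < n" "w \<in> Rn n - {0}" "hyperplane n w 0 \<noteq> hyperplane n (unitv k) 0"
  shows "del k w \<in> Rn (n - 1) - {0}"
proof -
  have "del k w \<noteq> 0"
  proof
    assume "del k w = 0"
    then have w: "w = fscale (w k) (unitv k)"
      by (rule del_eq_0_imp)
    have "w k \<noteq> 0"
    proof
      assume "w k = 0"
      with w have "w = 0"
        by (metis fscale_zero_left)
      with assms(2) show False
        by blast
    qed
    with w have "hyperplane n w 0 = hyperplane n (unitv k) 0"
      using hyperplane_fscale by metis
    with assms(3) show False ..
  qed
  moreover have "del k w \<in> Rn (n - 1)"
    using assms(1,2) by (intro del_in_Rn) auto
  ultimately show ?thesis
    by simp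
qed

lemma arr_rank_insert_coord:
  assumes "finite B" "k < n" "\<forall>H \<in> B. central_hyperplane n H"
    and notin: "hyperplane n (unitv k) 0 \<notin> B"
  shows "arr_rank n (insert (hyperplane n (unitv k) 0) B)
           = Suc (arr_rank (n - 1) (restr (n - 1) k ` B))"
proof -
  obtain W where W: "finite W" "W \<subseteq> Rn n - {0}" and B: "B = (\<lambda>w. hyperplane n w 0) ` W"
    using central_hyperplanes_normals[OF assms(1,3)] by blast
  have "del k w \<in> Rn (n - 1) - {0}" if "w \<in> W" for w
  proof (rule del_normal[OF assms(2)])
    show "w \<in> Rn n - {0}"
      using that W(2) by blast
    have "hyperplane n w 0 \<in> B"
      using that by (simp add: B)
    with notin show "hyperplane n w 0 \<noteq> hyperplane n (unitv k) 0"
      by metis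
  qed
  then have delW: "del k ` W \<subseteq> Rn (n - 1) - {0}"
    by (simp add: image_subset_iff)
  have "arr_rank n (insert (hyperplane n (unitv k) 0) B) = V.dim (insert (unitv k) W)"
    using arr_rank_image[of "insert (unitv k) W" n] W(2) unitv_in_Rn[OF assms(2)] B by simp
  also have "\<dots> = Suc (V.dim (del k ` W))"
    using W(1) by (rule dim_insert_unitv)
  also have "V.dim (del k ` W) = arr_rank (n - 1) (restr (n - 1) k ` B)"
    using arr_rank_image[OF delW] restr_hyperplane[OF assms(2) refl] by (simp add: B image_image)
  finally show ?thesis .
qed

section \<open>Alternating sums over subsets\<close>

lemma sum_Pow_insert:
  assumes "finite D" "x \<notin> D"
  shows "(\<Sum>B \<in> Pow (insert x D). h B) = (\<Sum>B \<in> Pow D. h B) + (\<Sum>B \<in> Pow D. h (insert x B))"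
proof -
  have "inj_on (insert x) (Pow D)" "Pow D \<inter> insert x ` Pow D = {}"
    using assms(2) by (auto simp: inj_on_def)
  then show ?thesis
    using assms(1) by (simp add: Pow_insert sum.union_disjoint sum.reindex)
qed

definition fibre_sign_sum :: "('a \<Rightarrow> 'b) \<Rightarrow> 'a set \<Rightarrow> 'b set \<Rightarrow> 'c::comm_ring_1" where
  "fibre_sign_sum f D R = (\<Sum>B \<in> Pow D. if f ` B = R then (-1) ^ card B else 0)"

lemma fibre_sign_sum_insert:
  assumes "finite D" "x \<notin> D"
  shows "fibre_sign_sum f (insert x D) R
           = (if f x \<in> R then - fibre_sign_sum f D (R - {f x}) else (fibre_sign_sum f D R :: 'c::comm_ring_1))"
proof -
  let ?T = "\<Sum>B \<in> Pow D. if insert (f x) (f ` B) = R then (-1::'c) ^ card B else 0"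
  have card_insert: "card (insert x B) = Suc (card B)" if "B \<in> Pow D" for B
  proof -
    have "finite B" "x \<notin> B"
      using that assms by (auto intro: finite_subset)
    then show ?thesis
      by simp
  qed
  have "fibre_sign_sum f (insert x D) R = fibre_sign_sum f D R
      + (\<Sum>B \<in> Pow D. if insert (f x) (f ` B) = R then (-1::'c) ^ card (insert x B) else 0)"
    using assms by (simp add: fibre_sign_sum_def sum_Pow_insert)
  also have "(\<Sum>B \<in> Pow D. if insert (f x) (f ` B) = R then (-1::'c) ^ card (insert x B) else 0) = - ?T"
    unfolding sum_negf[symmetric] by (intro sum.cong refl) (simp add: card_insert)
  finally have split: "fibre_sign_sum f (insert x D) R = fibre_sign_sum f D R - ?T"
    by simp
  show ?thesis
  proof (cases "f x \<in> R")
    case True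
    have "?T = (\<Sum>B \<in> Pow D. (if f ` B = R then (-1) ^ card B else 0)
                          + (if f ` B = R - {f x} then (-1) ^ card B else 0))"
    proof (intro sum.cong refl)
      fix B
      have "insert (f x) (f ` B) = R \<longleftrightarrow> f ` B = R \<or> f ` B = R - {f x}"
        using True by blast
      moreover have "f ` B = R \<Longrightarrow> f ` B \<noteq> R - {f x}"
        using True by blast
      ultimately show "(if insert (f x) (f ` B) = R then (-1::'c) ^ card B else 0)
          = (if f ` B = R then (-1) ^ card B else 0) + (if f ` B = R - {f x} then (-1) ^ card B else 0)"
        by auto
    qed
    then show ?thesis
      using split True by (simp add: sum.distrib fibre_sign_sum_def)
  next
    case False
    then have "?T = 0"
      by (intro sum.neutral) auto
    then show ?thesis
      using split False by simp
  qed
qed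

lemma fibre_sign_sum_eq:
  assumes "finite D"
  shows "fibre_sign_sum f D R = (if R \<subseteq> f ` D then (-1) ^ card R else (0 :: 'c::comm_ring_1))"
  using assms
proof (induction D arbitrary: R rule: finite_induct)
  case empty
  then show ?case
    by (auto simp: fibre_sign_sum_def)
next
  case (insert x D)
  show ?case
  proof (cases "f x \<in> R")
    case True
    have "R \<subseteq> f ` insert x D \<longleftrightarrow> R - {f x} \<subseteq> f ` D"
      using True by auto
    moreover have "(-1) ^ card R = - ((-1) ^ card (R - {f x}) :: 'c)" if "R \<subseteq> f ` insert x D"
    proof -
      have "card R = Suc (card (R - {f x}))"
        using that True insert.hyps(1) by (metis card_Suc_Diff1 finite_imageI finite_subset finite_insert)
      then show ?thesis
        by simp
    qed
    ultimately show ?thesis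
      using True insert by (auto simp: fibre_sign_sum_insert)
  next
    case False
    then have "R \<subseteq> f ` insert x D \<longleftrightarrow> R \<subseteq> f ` D"
      by auto
    then show ?thesis
      using False insert by (simp add: fibre_sign_sum_insert)
  qed
qed

lemma sum_Pow_image_alternating:
  fixes f :: "'a \<Rightarrow> 'b" and \<phi> :: "'b set \<Rightarrow> 'c::comm_ring_1"
  assumes "finite D"
  shows "(\<Sum>B \<in> Pow D. (-1) ^ card B * \<phi> (f ` B)) = (\<Sum>R \<in> Pow (f ` D). (-1) ^ card R * \<phi> R)"
proof -
  have "(\<Sum>B \<in> Pow D. (-1) ^ card B * \<phi> (f ` B))
      = (\<Sum>B \<in> Pow D. \<Sum>R \<in> Pow (f ` D). if f ` B = R then (-1) ^ card B * \<phi> R else 0)"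
    by (intro sum.cong) (auto simp: sum.delta' assms)
  also have "\<dots> = (\<Sum>R \<in> Pow (f ` D). \<Sum>B \<in> Pow D. if f ` B = R then (-1) ^ card B * \<phi> R else 0)"
    by (rule sum.swap)
  also have "\<dots> = (\<Sum>R \<in> Pow (f ` D). fibre_sign_sum f D R * \<phi> R)"
    unfolding sum_distrib_right fibre_sign_sum_def by (intro sum.cong refl) simp
  also have "\<dots> = (\<Sum>R \<in> Pow (f ` D). (-1) ^ card R * \<phi> R)"
    by (intro sum.cong) (simp_all add: fibre_sign_sum_eq assms)
  finally show ?thesis .
qed

section \<open>Deletion and restriction\<close>

text \<open>Whitney's formula, valid for central arrangements.\<close>

definition char_poly_central :: "nat \<Rightarrow> (nat \<Rightarrow> real) set set \<Rightarrow> real poly" where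
  "char_poly_central n A = (\<Sum>B \<in> Pow A. (-1) ^ card B * monom 1 (n - arr_rank n B))"

lemma char_poly_eq_central:
  assumes "\<And>H. H \<in> A \<Longrightarrow> 0 \<in> H"
  shows "char_poly n A = char_poly_central n A"
proof -
  have "{B. B \<subseteq> A \<and> Rn n \<inter> \<Inter>B \<noteq> {}} = Pow A"
    using assms zero_in_Rn by blast
  then show ?thesis
    by (simp add: char_poly_def char_poly_central_def)
qed

lemma char_poly_central_insert_coord:
  assumes "finite D" "k < n" "\<forall>H \<in> D. central_hyperplane n H"
    and notin: "hyperplane n (unitv k) 0 \<notin> D"
  shows "char_poly_central n (insert (hyperplane n (unitv k) 0) D)
           = char_poly_central n D - char_poly_central (n - 1) (restr (n - 1) k ` D)"
proof -
  let ?H = "hyperplane n (unitv k) 0"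
  have "char_poly_central n (insert ?H D) = char_poly_central n D
          + (\<Sum>B \<in> Pow D. (-1) ^ card (insert ?H B) * monom 1 (n - arr_rank n (insert ?H B)))"
    unfolding char_poly_central_def by (rule sum_Pow_insert[OF assms(1) notin])
  also have "(\<Sum>B \<in> Pow D. (-1) ^ card (insert ?H B) * monom 1 (n - arr_rank n (insert ?H B)))
      = - (\<Sum>B \<in> Pow D. (-1) ^ card B * monom 1 (n - 1 - arr_rank (n - 1) (restr (n - 1) k ` B)) :: real poly)"
    unfolding sum_negf[symmetric]
  proof (rule sum.cong[OF refl])
    fix B assume "B \<in> Pow D"
    then have B: "finite B" "?H \<notin> B" "\<forall>H \<in> B. central_hyperplane n H"
      using assms by (auto intro: finite_subset)
    then have "n - arr_rank n (insert ?H B) = n - 1 - arr_rank (n - 1) (restr (n - 1) k ` B)"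
      using arr_rank_insert_coord[OF B(1) assms(2) B(3,2)] by simp
    moreover have "card (insert ?H B) = Suc (card B)"
      using B by simp
    ultimately show "(-1) ^ card (insert ?H B) * monom 1 (n - arr_rank n (insert ?H B))
        = - ((-1) ^ card B * (monom 1 (n - 1 - arr_rank (n - 1) (restr (n - 1) k ` B)) :: real poly))"
      by simp
  qed
  also have "(\<Sum>B \<in> Pow D. (-1) ^ card B * monom 1 (n - 1 - arr_rank (n - 1) (restr (n - 1) k ` B)) :: real poly)
      = char_poly_central (n - 1) (restr (n - 1) k ` D)"
    unfolding char_poly_central_def by (rule sum_Pow_image_alternating[OF assms(1)])
  finally show ?thesis
    by simp
qed

section \<open>The arrangements A_n(a)\<close>

lemma coord_in_arrA: "i < n \<Longrightarrow> hyperplane n (unitv i) 0 \<in> arrA a n"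
  unfolding arrA_def coord_hyps_def by blast

lemma diff_in_arrA:
  assumes "i < n" "j < n" "i \<noteq> j" "c \<in> insert 1 (of_rat ` a)"
  shows "hyperplane n (unitv i - fscale c (unitv j)) 0 \<in> arrA a n"
proof (cases "c = 1")
  case True
  show ?thesis
  proof (cases "i < j")
    case True
    then show ?thesis
      using \<open>c = 1\<close> assms unfolding arrA_def by auto
  next
    case False
    have "hyperplane n (unitv i - unitv j) 0 = hyperplane n (unitv j - unitv i) 0"
      using hyperplane_uminus[of n "unitv j - unitv i"] by simp
    then show ?thesis
      using \<open>c = 1\<close> False assms unfolding arrA_def by (simp, blast intro: linorder_neqE_nat)
  qed
next
  case False
  then show ?thesis
    using assms unfolding arrA_def by blast
qed

lemma arrA_iff:
  "H \<in> arrA a n \<longleftrightarrow> (\<exists>i < n. H = hyperplane n (unitv i) 0)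
     \<or> (\<exists>i < n. \<exists>j < n. \<exists>c \<in> insert 1 (of_rat ` a).
          i \<noteq> j \<and> H = hyperplane n (unitv i - fscale c (unitv j)) 0)"
  (is "_ \<longleftrightarrow> ?coord \<or> ?diff")
proof
  assume "H \<in> arrA a n"
  then consider (coord) i where "i < n" "H = hyperplane n (unitv i) 0"
    | (eq) i j where "i < j" "j < n" "H = hyperplane n (unitv i - unitv j) 0"
    | (ratio) i j r where "i < n" "j < n" "i \<noteq> j" "r \<in> a"
        "H = hyperplane n (unitv i - fscale (of_rat r) (unitv j)) 0"
    unfolding arrA_def coord_hyps_def by blast
  then show "?coord \<or> ?diff"
  proof cases
    case coord
    then show ?thesis
      by blast
  next
    case eq
    then show ?thesis
      by (intro disjI2 exI[of _ i] conjI exI[of _ j] bexI[of _ 1]) auto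
  next
    case ratio
    then show ?thesis
      by (intro disjI2 exI[of _ i] conjI exI[of _ j] bexI[of _ "of_rat r"]) auto
  qed
next
  show "?coord \<or> ?diff \<Longrightarrow> H \<in> arrA a n"
    using coord_in_arrA diff_in_arrA by blast
qed

lemma arrA_central:
  assumes "H \<in> arrA a n"
  shows "central_hyperplane n H"
  using assms unfolding arrA_iff
proof (elim disjE exE bexE conjE)
  fix i assume "i < n" "H = hyperplane n (unitv i) 0"
  then show ?thesis
    unfolding central_hyperplane_def using unitv_in_Rn[of i n] unitv_neq_0[of i] by blast
next
  fix i j c assume ijc: "i < n" "j < n" "i \<noteq> j" "H = hyperplane n (unitv i - fscale c (unitv j)) 0"
  have "(unitv i - fscale c (unitv j)) i = 1"
    using ijc(3) by (simp add: unitv_def)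
  then have "unitv i - fscale c (unitv j) \<noteq> 0"
    by (metis one_neq_zero zero_fun_apply)
  moreover have "unitv i - fscale c (unitv j) \<in> Rn n"
    using ijc(1,2) by (simp add: Rn_def unitv_def)
  ultimately show ?thesis
    unfolding central_hyperplane_def using ijc(4) by blast
qed

lemma zero_in_central_hyperplane: "central_hyperplane n H \<Longrightarrow> 0 \<in> H"
  by (auto simp: central_hyperplane_def hyperplane_def zero_in_Rn dotn_zero)

lemma finite_arrA:
  assumes "finite a"
  shows "finite (arrA a n)"
proof -
  have "arrA a n \<subseteq> (\<lambda>i. hyperplane n (unitv i) 0) ` {..<n}
        \<union> (\<lambda>(i, j, c). hyperplane n (unitv i - fscale c (unitv j)) 0)
            ` ({..<n} \<times> {..<n} \<times> insert 1 (of_rat ` a))"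
  proof
    fix H assume "H \<in> arrA a n"
    then show "H \<in> (\<lambda>i. hyperplane n (unitv i) 0) ` {..<n}
        \<union> (\<lambda>(i, j, c). hyperplane n (unitv i - fscale c (unitv j)) 0)
            ` ({..<n} \<times> {..<n} \<times> insert 1 (of_rat ` a))"
      unfolding arrA_iff
    proof (elim disjE exE bexE conjE)
      fix i assume "i < n" "H = hyperplane n (unitv i) 0"
      then show ?thesis
        by (intro UnI1 image_eqI[of _ _ i]) auto
    next
      fix i j c assume "i < n" "j < n" "c \<in> insert 1 (of_rat ` a)"
        "H = hyperplane n (unitv i - fscale c (unitv j)) 0"
      then show ?thesis
        by (intro UnI2 image_eqI[of _ _ "(i, j, c)"]) auto
    qed
  qed
  then show ?thesis
    by (rule finite_subset) (use assms in auto)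
qed

lemma diff_hyperplane_neq_coord:
  assumes "p < n" "q < n" "p \<noteq> q" "c \<noteq> 0"
  shows "hyperplane n (unitv p - fscale c (unitv q)) 0 \<noteq> hyperplane n (unitv j) 0"
proof (cases "j = p")
  case True
  have "(unitv p - fscale c (unitv q)) q \<noteq> 0"
    using assms(3,4) by (simp add: unitv_def)
  then show ?thesis
    using True assms by (intro hyperplane_neq_coord[where p = q]) auto
next
  case False
  have "(unitv p - fscale c (unitv q)) p \<noteq> 0"
    using assms(3) by (simp add: unitv_def)
  then show ?thesis
    using False assms by (intro hyperplane_neq_coord[where p = p]) auto
qed

definition arrA_drop_coords :: "rat set \<Rightarrow> nat \<Rightarrow> nat \<Rightarrow> (nat \<Rightarrow> real) set set" where
  "arrA_drop_coords a n k = arrA a n - (\<lambda>j. hyperplane n (unitv j) 0) ` {..<k}"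

lemma restr_mem_arrA:
  assumes "0 \<notin> a" "k < n" "G \<in> arrA_drop_coords a n (Suc k)"
  shows "restr (n - 1) k G \<in> arrA a (n - 1)"
proof -
  have G: "G \<in> arrA a n" "G \<notin> (\<lambda>j. hyperplane n (unitv j) 0) ` {..<Suc k}"
    using assms(3) unfolding arrA_drop_coords_def by blast+
  define H where "H = restr (n - 1) k G"
  from G(1) have "H \<in> arrA a (n - 1)"
    unfolding arrA_iff[of G]
  proof (elim disjE exE bexE conjE)
    fix i assume i: "i < n" "G = hyperplane n (unitv i) 0"
    with G(2) have "i \<noteq> k"
      by blast
    with i obtain i' where "i' < n - 1" "i = skip k i'"
      using assms(2) skip_preimageE by blast
    moreover have "H = hyperplane (n - 1) (del k (unitv i)) 0"
      using i(2) assms(2) by (simp add: H_def restr_hyperplane)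
    ultimately show "H \<in> arrA a (n - 1)"
      by (simp add: coord_in_arrA)
  next
    fix i j c assume ijc: "i < n" "j < n" "c \<in> insert 1 (of_rat ` a)" "i \<noteq> j"
      "G = hyperplane n (unitv i - fscale c (unitv j)) 0"
    have H_eq: "H = hyperplane (n - 1) (del k (unitv i) - fscale c (del k (unitv j))) 0"
      using ijc(5) assms(2) by (simp add: H_def restr_hyperplane)
    consider "i = k" | "j = k" | "i \<noteq> k" "j \<noteq> k"
      by blast
    then show "H \<in> arrA a (n - 1)"
    proof cases
      case 1
      with ijc obtain j' where "j' < n - 1" "j = skip k j'"
        using assms(2) skip_preimageE by metis
      moreover have "c \<noteq> 0"
        using ijc(3) assms(1) by auto
      ultimately show ?thesis
        using 1 H_eq by (simp add: hyperplane_uminus hyperplane_fscale coord_in_arrA)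
    next
      case 2
      with ijc obtain i' where "i' < n - 1" "i = skip k i'"
        using assms(2) skip_preimageE by metis
      then show ?thesis
        using 2 H_eq by (simp add: coord_in_arrA)
    next
      case 3
      with ijc obtain i' j' where "i' < n - 1" "i = skip k i'" "j' < n - 1" "j = skip k j'"
        using assms(2) skip_preimageE by metis
      then show ?thesis
        using H_eq ijc(3,4) by (simp add: diff_in_arrA)
    qed
  qed
  then show ?thesis
    by (simp add: H_def)
qed

lemma arrA_subset_restr:
  assumes "0 \<notin> a" "k < n" "H \<in> arrA a (n - 1)"
  shows "H \<in> restr (n - 1) k ` arrA_drop_coords a n (Suc k)"
proof -
  have preimage: "H \<in> restr (n - 1) k ` arrA_drop_coords a n (Suc k)"
    if "p < n" "q < n" "p \<noteq> q" "c \<in> insert 1 (of_rat ` a)"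
      and "H = restr (n - 1) k (hyperplane n (unitv p - fscale c (unitv q)) 0)" for p q c
  proof -
    have "c \<noteq> 0"
      using that(4) assms(1) by auto
    then have "hyperplane n (unitv p - fscale c (unitv q)) 0 \<in> arrA_drop_coords a n (Suc k)"
      using that(1-4) diff_hyperplane_neq_coord[OF that(1-3)]
      by (auto simp: arrA_drop_coords_def diff_in_arrA)
    then show ?thesis
      using that(5) by blast
  qed
  from assms(3) show "H \<in> restr (n - 1) k ` arrA_drop_coords a n (Suc k)"
    unfolding arrA_iff[of H]
  proof (elim disjE exE bexE conjE)
    fix i assume "i < n - 1" "H = hyperplane (n - 1) (unitv i) 0"
    \<comment> \<open>\<open>x\<^sub>i = 0\<close> itself may have been dropped, so use \<open>x\<^sub>i = x\<^sub>k\<close> instead\<close>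
    then show ?thesis
      using assms(2) by (intro preimage[of "skip k i" k 1]) (simp_all add: skip_less restr_hyperplane)
  next
    fix i j c assume "i < n - 1" "j < n - 1" "c \<in> insert 1 (of_rat ` a)" "i \<noteq> j"
      "H = hyperplane (n - 1) (unitv i - fscale c (unitv j)) 0"
    then show ?thesis
      using assms(2) by (intro preimage[of "skip k i" "skip k j" c]) (simp_all add: skip_less restr_hyperplane)
  qed
qed

lemma restr_arrA_drop_coords:
  assumes "0 \<notin> a" "k < n"
  shows "restr (n - 1) k ` arrA_drop_coords a n (Suc k) = arrA a (n - 1)"
  using restr_mem_arrA[OF assms] arrA_subset_restr[OF assms] by blast

lemma arrA_drop_coords_Suc:
  assumes "k < n"
  shows "arrA_drop_coords a n k = insert (hyperplane n (unitv k) 0) (arrA_drop_coords a n (Suc k))"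
proof -
  have "hyperplane n (unitv k) 0 \<noteq> hyperplane n (unitv j) 0" if "j < k" for j
    using assms that by (intro hyperplane_neq_coord) (auto simp: unitv_def)
  then have "hyperplane n (unitv k) 0 \<notin> (\<lambda>j. hyperplane n (unitv j) 0) ` {..<k}"
    by blast
  moreover have "hyperplane n (unitv k) 0 \<in> arrA a n"
    using assms by (rule coord_in_arrA)
  ultimately show ?thesis
    unfolding arrA_drop_coords_def lessThan_Suc image_insert by blast
qed

lemma char_poly_central_arrA_drop_coords:
  assumes "finite a" "0 \<notin> a" "k \<le> n"
  shows "char_poly_central n (arrA a n)
           = char_poly_central n (arrA_drop_coords a n k) - of_nat k * char_poly_central (n - 1) (arrA a (n - 1))"
  using assms(3)
proof (induction k)
  case 0
  then show ?case
    by (simp add: arrA_drop_coords_def)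
next
  case (Suc k)
  then have "k < n"
    by simp
  let ?D = "arrA_drop_coords a n (Suc k)"
  have "finite ?D"
    using finite_arrA[OF assms(1)] by (simp add: arrA_drop_coords_def)
  moreover have "\<forall>H \<in> ?D. central_hyperplane n H"
    unfolding arrA_drop_coords_def using arrA_central by blast
  moreover have "hyperplane n (unitv k) 0 \<notin> ?D"
    unfolding arrA_drop_coords_def by blast
  ultimately have "char_poly_central n (insert (hyperplane n (unitv k) 0) ?D)
      = char_poly_central n ?D - char_poly_central (n - 1) (restr (n - 1) k ` ?D)"
    by (rule char_poly_central_insert_coord[OF _ \<open>k < n\<close>])
  then have "char_poly_central n (arrA_drop_coords a n k)
      = char_poly_central n ?D - char_poly_central (n - 1) (arrA a (n - 1))"
    by (simp only: arrA_drop_coords_Suc[OF \<open>k < n\<close>] restr_arrA_drop_coords[OF assms(2) \<open>k < n\<close>])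
  then show ?case
    using Suc by (simp add: algebra_simps)
qed

theorem mainTheorem3:
  fixes a :: "rat set" and n :: nat
  assumes "finite a"
    and "\<forall>r\<in>a. r > 0 \<and> r \<noteq> 1"
    and "n \<ge> 1"
  shows "char_poly n (arrA' a n) = char_poly n (arrA a n) + of_nat n * char_poly (n - 1) (arrA a (n - 1))"
proof -
  have "0 \<notin> a"
    using assms(2) by auto
  have "coord_hyps n = (\<lambda>j. hyperplane n (unitv j) 0) ` {..<n}"
    by (auto simp: coord_hyps_def)
  then have "arrA' a n = arrA_drop_coords a n n"
    by (simp add: arrA'_def arrA_drop_coords_def)
  then have "char_poly_central n (arrA' a n)
      = char_poly_central n (arrA a n) + of_nat n * char_poly_central (n - 1) (arrA a (n - 1))"
    using char_poly_central_arrA_drop_coords[OF assms(1) \<open>0 \<notin> a\<close> order_refl]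
    by (metis diff_add_cancel)
  moreover have "char_poly m A = char_poly_central m A" if "A \<subseteq> arrA a m" for m A
    by (intro char_poly_eq_central) (meson that arrA_central zero_in_central_hyperplane subsetD)
  moreover have "arrA' a n \<subseteq> arrA a n"
    by (simp add: arrA'_def)
  ultimately show ?thesis
    by (metis order_refl)
qed

end
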